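(* Let $q\ge 2^{40}$ be a prime power, $n=q^2(q^2-q+1)$ and $m=2^{24}q^2$. For every $X\subseteq V(H_q)$ with $|X|=m$, letting $Z_X$ be the number of edges of $H_q^*$ with both endpoints in $X$, \[ \mathbb P\bigl(Z_X\le 2^{40}q^3\bigr)<n^{-m}. \]
   Context: $\mathcal H$ is the Hermitian unital $\{\langle x,y,z\rangle : x^{q+1}+y^{q+1}+z^{q+1}=0\}$ in the projective plane $\mathrm{PG}(2,q^2)$ (it has $q^3+1$ points and every line meets it in $1$ or $q+1$ points; lines meeting it in $q+1$ points are secants). $H_q$ is the graph on the set of secants, two distinct secants adjacent iff they meet in a point of $\mathcal H$; it has $n=q^2(q^2-q+1)$ vertices. For $P\in\mathcal H$, $C_P$ is the set of secants through $P$ and $\mathcal C=\{C_P:P\in\mathcal H\}$. The random graph $H_q^*$ on vertex set $V(H_q)$ is defined as follows: for each $C\in\mathcal C$, independently over cliques and vertices, each vertex of $C$ is placed in $A_C$ or $B_C$ with probability $1/2$ each; $H_q^*$ is the union over $C\in\mathcal C$ of the complete bipartite graphs with parts $A_C$ and $B_C$. Logarithms are natural. *)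

theory Defs
  imports "HOL-Probability.Probability"
begin

type_synonym 'a vec3 = "'a \<times> 'a \<times> 'a"

definition smult3 :: "'a::field \<Rightarrow> 'a vec3 \<Rightarrow> 'a vec3" where
  "smult3 c v = (case v of (x, y, z) \<Rightarrow> (c * x, c * y, c * z))"

definition dot3 :: "'a::field vec3 \<Rightarrow> 'a vec3 \<Rightarrow> 'a" where
  "dot3 u v = (case u of (a, b, c) \<Rightarrow> case v of (x, y, z) \<Rightarrow> a * x + b * y + c * z)"

definition proj_point :: "'a::field vec3 \<Rightarrow> 'a vec3 set" where
  "proj_point v = {smult3 c v | c. c \<noteq> 0}"

definition PG_points :: "'a::field vec3 set set" where
  "PG_points = {proj_point v | v. v \<noteq> 0}"

definition proj_line :: "'a::field vec3 \<Rightarrow> 'a vec3 set set" where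
  "proj_line u = {proj_point v | v. v \<noteq> 0 \<and> dot3 u v = 0}"

definition PG_lines :: "'a::field vec3 set set set" where
  "PG_lines = {proj_line u | u. u \<noteq> 0}"

definition hermitian_unital :: "nat \<Rightarrow> 'a::field vec3 set set" where
  "hermitian_unital q =
     {proj_point (x, y, z) | x y z. (x, y, z) \<noteq> 0 \<and> x ^ (q + 1) + y ^ (q + 1) + z ^ (q + 1) = 0}"

text \<open>Secants: lines meeting the unital in q+1 points. These are the vertices of H_q.\<close>
definition secants :: "nat \<Rightarrow> 'a::field vec3 set set set" where
  "secants q = {L \<in> PG_lines. card (L \<inter> hermitian_unital q) = q + 1}"

text \<open>Incident pairs (P, l) with P a point of the unital and l a secant through P,
  i.e. the pairs (clique C_P, vertex of C_P).\<close>
definition incid :: "nat \<Rightarrow> ('a::field vec3 set \<times> 'a vec3 set set) set" where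
  "incid q = {(P, l). P \<in> hermitian_unital q \<and> l \<in> secants q \<and> P \<in> l}"

text \<open>The sample space: a fair independent coin for each incident pair;
  sigma (P,l) = True means l \<in> A_{C_P}, False means l \<in> B_{C_P}.\<close>
definition coin_space :: "nat \<Rightarrow> (('a::{field,finite} vec3 set \<times> 'a vec3 set set) \<Rightarrow> bool) pmf" where
  "coin_space q = pmf_of_set (PiE (incid q) (\<lambda>_. UNIV))"

text \<open>Adjacency in H_q^*: union over P of the complete bipartite graphs between A_{C_P} and B_{C_P}.\<close>
definition Hstar_adj :: "nat \<Rightarrow> ('a::field vec3 set \<times> 'a vec3 set set \<Rightarrow> bool)
    \<Rightarrow> 'a vec3 set set \<Rightarrow> 'a vec3 set set \<Rightarrow> bool" where
  "Hstar_adj q \<sigma> l l' \<longleftrightarrow>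
     (\<exists>P \<in> hermitian_unital q. (P, l) \<in> incid q \<and> (P, l') \<in> incid q \<and> \<sigma> (P, l) \<noteq> \<sigma> (P, l'))"

definition Z_edges :: "nat \<Rightarrow> 'a::field vec3 set set set
    \<Rightarrow> ('a vec3 set \<times> 'a vec3 set set \<Rightarrow> bool) \<Rightarrow> nat" where
  "Z_edges q X \<sigma> = card {{l, l'} | l l'. l \<in> X \<and> l' \<in> X \<and> l \<noteq> l' \<and> Hstar_adj q \<sigma> l l'}"

end

(* Call a point P of the unital rich if at least 2^22 secants of X pass through it. Every secant
   has q + 1 points and the unital has at most 2 q^3 points, so the rich points carry at least
   2^23 q^3 incidences (P, l) with l in X. The clique C_P contributes a_P b_P edges to Z_X, where
   a_P and b_P count the secants of X through P on either side, and no edge arises from two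
   points since two secants meet at most once. As a_P + b_P >= 2^22 at a rich point, the event
   Z_X <= 2^40 q^3 forces the minority coins min(a_P, b_P), summed over the rich points, to number
   at most M = 2^19 q^3. Such a colouring is determined by its set of minority coins, one majority
   bit per rich point and the remaining coins; counting these gives probability at most 2^(-8M),
   and n^m < 2^(8M) because q^16 < 2^q. *)

theory Submission
  imports Defs "HOL-Computational_Algebra.Polynomial"
begin

section \<open>Lines of the projective plane\<close>

lemma smult3_simp [simp]: "smult3 c (x, y, z) = (c * x, c * y, c * z)"
  by (simp add: smult3_def)

lemma dot3_simp [simp]: "dot3 (a, b, c) (x, y, z) = a * x + b * y + c * z"
  by (simp add: dot3_def)

lemma smult3_smult3: "smult3 c (smult3 d v) = smult3 (c * d) (v :: 'a::field vec3)"
  by (cases v) (simp add: mult.assoc)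

lemma smult3_eq_0_iff: "(c :: 'a::field) \<noteq> 0 \<Longrightarrow> smult3 c v = 0 \<longleftrightarrow> v = 0"
  by (cases v) (auto simp: zero_prod_def)

lemma dot3_commute: "dot3 u v = dot3 v (u :: 'a::field vec3)"
  by (cases u; cases v) (simp add: mult.commute)

lemma dot3_smult3_left: "dot3 (smult3 c u) v = c * dot3 u (v :: 'a::field vec3)"
  by (cases u; cases v) (simp add: algebra_simps)

lemma dot3_smult3_right: "dot3 u (smult3 c v) = c * dot3 u (v :: 'a::field vec3)"
  by (cases u; cases v) (simp add: algebra_simps)

lemma smult3_one [simp]: "smult3 1 v = (v :: 'a::field vec3)"
  by (cases v) simp

lemma smult3_zero_left [simp]: "smult3 0 v = (0 :: 'a::field vec3)"
  by (cases v) (simp add: zero_prod_def)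

lemma smult3_in_proj_point: "(c :: 'a::field) \<noteq> 0 \<Longrightarrow> smult3 c v \<in> proj_point v"
  unfolding proj_point_def by blast

lemma in_proj_point_self: "v \<in> proj_point (v :: 'a::field vec3)"
  using smult3_in_proj_point[of 1 v] by simp

lemma proj_point_smult3:
  assumes "(c :: 'a::field) \<noteq> 0"
  shows "proj_point (smult3 c v) = proj_point v"
proof
  show "proj_point (smult3 c v) \<subseteq> proj_point v"
  proof
    fix x assume "x \<in> proj_point (smult3 c v)"
    then obtain d where "d \<noteq> 0" "x = smult3 (d * c) v"
      unfolding proj_point_def by (auto simp: smult3_smult3)
    with assms show "x \<in> proj_point v"
      by (simp add: smult3_in_proj_point)
  qed
  show "proj_point v \<subseteq> proj_point (smult3 c v)"
  proof
    fix x assume "x \<in> proj_point v"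
    then obtain d where "d \<noteq> 0" "x = smult3 d v"
      unfolding proj_point_def by auto
    with assms have "d / c \<noteq> 0" "x = smult3 (d / c) (smult3 c v)"
      by (simp_all add: smult3_smult3)
    then show "x \<in> proj_point (smult3 c v)"
      by (simp add: smult3_in_proj_point)
  qed
qed

lemma proj_point_eq_imp_smult3:
  assumes "proj_point v = proj_point (w :: 'a::field vec3)"
  shows "\<exists>c. c \<noteq> 0 \<and> w = smult3 c v"
proof -
  have "w \<in> proj_point v" using assms in_proj_point_self[of w] by simp
  then show ?thesis unfolding proj_point_def by auto
qed

lemma proj_point_eq_if_mem:
  assumes "x \<in> proj_point (v :: 'a::field vec3)"
  shows "proj_point x = proj_point v"
proof -
  from assms obtain c where "c \<noteq> 0" "x = smult3 c v"
    unfolding proj_point_def by auto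
  then show ?thesis by (simp add: proj_point_smult3)
qed

lemma proj_line_smult3: "(c :: 'a::field) \<noteq> 0 \<Longrightarrow> proj_line (smult3 c u) = proj_line u"
  unfolding proj_line_def by (simp add: dot3_smult3_left)

lemma dot3_eq_0_if_in_proj_line:
  assumes "proj_point w \<in> proj_line (u :: 'a::field vec3)"
  shows "dot3 u w = 0"
proof -
  obtain v where v: "dot3 u v = 0" "proj_point w = proj_point v"
    using assms unfolding proj_line_def by auto
  then obtain c where "c \<noteq> 0" "v = smult3 c w"
    using proj_point_eq_imp_smult3 by blast
  with v show ?thesis by (simp add: dot3_smult3_right)
qed

definition cross3 :: "'a::field vec3 \<Rightarrow> 'a vec3 \<Rightarrow> 'a vec3" where
  "cross3 v w = (case v of (v1, v2, v3) \<Rightarrow> case w of (w1, w2, w3) \<Rightarrow>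
     (v2 * w3 - v3 * w2, v3 * w1 - v1 * w3, v1 * w2 - v2 * w1))"

lemma cross3_eq_0_imp_smult3:
  assumes "v \<noteq> 0" "cross3 v w = (0 :: 'a::field vec3)"
  shows "\<exists>k. w = smult3 k v"
proof -
  obtain v1 v2 v3 w1 w2 w3 where vw: "v = (v1, v2, v3)" "w = (w1, w2, w3)"
    by (cases v; cases w) auto
  have eqs: "v2 * w3 = v3 * w2" "v3 * w1 = v1 * w3" "v1 * w2 = v2 * w1"
    using assms(2) by (auto simp: vw cross3_def zero_prod_def)
  consider "v1 \<noteq> 0" | "v2 \<noteq> 0" | "v3 \<noteq> 0"
    using assms(1) by (auto simp: vw zero_prod_def)
  then show ?thesis
  proof cases
    case 1
    then show ?thesis using eqs by (intro exI[of _ "w1 / v1"]) (auto simp: vw field_simps)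
  next
    case 2
    then show ?thesis using eqs by (intro exI[of _ "w2 / v2"]) (auto simp: vw field_simps)
  next
    case 3
    then show ?thesis using eqs by (intro exI[of _ "w3 / v3"]) (auto simp: vw field_simps)
  qed
qed

text \<open>The expansion \<open>(v \<times> w) \<times> y = (v \<bullet> y) w - (w \<bullet> y) v\<close>.\<close>
lemma cross3_cross3_eq_0:
  assumes "dot3 y v = 0" "dot3 y w = (0 :: 'a::field)"
  shows "cross3 (cross3 v w) y = 0"
proof -
  obtain v1 v2 v3 w1 w2 w3 y1 y2 y3 where vwy: "v = (v1, v2, v3)" "w = (w1, w2, w3)" "y = (y1, y2, y3)"
    by (cases v; cases w; cases y) auto
  have "cross3 (cross3 v w) y = (w1 * dot3 v y - v1 * dot3 w y,
      w2 * dot3 v y - v2 * dot3 w y, w3 * dot3 v y - v3 * dot3 w y)"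
    unfolding vwy cross3_def by (simp add: algebra_simps)
  with assms show ?thesis by (simp add: dot3_commute[of y] zero_prod_def)
qed

lemma PG_lines_meet_at_most_once:
  assumes "l \<in> PG_lines" "l' \<in> PG_lines" "l \<noteq> l'"
    and "P \<in> l" "P \<in> l'" "P' \<in> l" "P' \<in> (l' :: 'a::field vec3 set set)"
  shows "P = P'"
proof (rule ccontr)
  assume "P \<noteq> P'"
  obtain u u' where u: "u \<noteq> 0" "l = proj_line u" and u': "u' \<noteq> 0" "l' = proj_line u'"
    using assms(1,2) unfolding PG_lines_def by auto
  obtain v w where v: "v \<noteq> 0" "P = proj_point v" and w: "w \<noteq> 0" "P' = proj_point w"
    using assms(4,6) unfolding u proj_line_def by auto
  have orth: "dot3 z v = 0" "dot3 z w = 0" if "z \<in> {u, u'}" for z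
  proof -
    have "proj_point v \<in> proj_line z" "proj_point w \<in> proj_line z"
      using that assms(4-7) u(2) u'(2) v(2) w(2) by auto
    then show "dot3 z v = 0" "dot3 z w = 0"
      by (simp_all add: dot3_eq_0_if_in_proj_line)
  qed
  have vw: "cross3 v w \<noteq> 0"
  proof
    assume "cross3 v w = 0"
    then obtain k where k: "w = smult3 k v" using cross3_eq_0_imp_smult3 v(1) by blast
    with w(1) have "k \<noteq> 0" by auto
    with k v w have "P' = P" by (simp add: proj_point_smult3)
    with \<open>P \<noteq> P'\<close> show False by simp
  qed
  have "\<exists>k. z = smult3 k (cross3 v w)" if "z \<in> {u, u'}" for z
    using cross3_eq_0_imp_smult3[OF vw cross3_cross3_eq_0[OF orth[OF that]]] .
  then obtain k k' where k: "u = smult3 k (cross3 v w)" and k': "u' = smult3 k' (cross3 v w)"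
    by blast
  with u(1) u'(1) have "k \<noteq> 0" "k' \<noteq> 0" by auto
  with k k' have "u' = smult3 (k' / k) u" by (simp add: smult3_smult3)
  with u u' \<open>k' \<noteq> 0\<close> \<open>k \<noteq> 0\<close> have "l' = l" by (simp add: proj_line_smult3)
  with assms(3) show False by simp
qed

section \<open>Size of the Hermitian unital\<close>

definition unital_vectors :: "nat \<Rightarrow> 'a::field vec3 set" where
  "unital_vectors q =
     {v. v \<noteq> 0 \<and> (case v of (x, y, z) \<Rightarrow> x ^ (q + 1) + y ^ (q + 1) + z ^ (q + 1) = 0)}"

lemma hermitian_unital_eq_image: "hermitian_unital q = proj_point ` unital_vectors q"
  unfolding hermitian_unital_def unital_vectors_def by auto

lemma smult3_in_unital_vectors:
  assumes "v \<in> unital_vectors q" "(c :: 'a::field) \<noteq> 0"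
  shows "smult3 c v \<in> unital_vectors q"
proof -
  obtain x y z where v: "v = (x, y, z)" by (cases v) auto
  have "(c * x) ^ (q + 1) + (c * y) ^ (q + 1) + (c * z) ^ (q + 1)
      = c ^ (q + 1) * (x ^ (q + 1) + y ^ (q + 1) + z ^ (q + 1))"
    by (simp only: power_mult_distrib distrib_left)
  moreover have "smult3 c v \<noteq> 0"
    using assms unfolding unital_vectors_def by (simp add: smult3_eq_0_iff)
  ultimately show ?thesis
    using assms(1) unfolding unital_vectors_def v by simp
qed

lemma Union_hermitian_unital: "\<Union> (hermitian_unital q) = unital_vectors q"
proof
  show "\<Union> (hermitian_unital q) \<subseteq> unital_vectors q"
  proof
    fix x assume "x \<in> \<Union> (hermitian_unital q)"
    then obtain v c where "v \<in> unital_vectors q" "c \<noteq> 0" "x = smult3 c v"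
      unfolding hermitian_unital_eq_image proj_point_def by auto
    then show "x \<in> unital_vectors q" by (simp add: smult3_in_unital_vectors)
  qed
  show "unital_vectors q \<subseteq> \<Union> (hermitian_unital q)"
    unfolding hermitian_unital_eq_image using in_proj_point_self by blast
qed

lemma card_roots_power_plus_const_le: "card {z :: 'a::field. z ^ Suc n + c = 0} \<le> Suc n"
proof -
  define p :: "'a poly" where "p = monom 1 (Suc n) + [:c:]"
  have deg: "degree p = Suc n"
    unfolding p_def by (subst degree_add_eq_left) (auto simp: degree_monom_eq)
  then have "p \<noteq> 0" by auto
  moreover have "{z. z ^ Suc n + c = 0} = {z. poly p z = 0}"
    unfolding p_def by (simp add: poly_monom)
  ultimately show ?thesis
    using card_poly_roots_bound[of p] deg by simp
qed

lemma card_unital_vectors_le: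
  "card (unital_vectors q :: 'a::{field,finite} vec3 set) \<le> CARD('a) ^ 2 * (q + 1)"
proof -
  define roots where "roots xy = {z :: 'a. z ^ Suc q + (fst xy ^ Suc q + snd xy ^ Suc q) = 0}"
    for xy :: "'a \<times> 'a"
  have sub: "unital_vectors q \<subseteq> (\<lambda>((x, y), z). (x, y, z)) ` Sigma UNIV roots"
  proof
    fix v :: "'a vec3" assume "v \<in> unital_vectors q"
    then obtain x y z where v: "v = (x, y, z)" and eq: "x ^ Suc q + y ^ Suc q + z ^ Suc q = 0"
      unfolding unital_vectors_def by auto
    have "z ^ Suc q + (x ^ Suc q + y ^ Suc q) = x ^ Suc q + y ^ Suc q + z ^ Suc q"
      by (rule add.commute)
    with eq have "z \<in> roots (x, y)"
      unfolding roots_def by simp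
    with v show "v \<in> (\<lambda>((x, y), z). (x, y, z)) ` Sigma UNIV roots"
      by (intro image_eqI[of _ _ "((x, y), z)"]) auto
  qed
  have "card (unital_vectors q :: 'a vec3 set)
      \<le> card ((\<lambda>((x, y), z). (x, y, z)) ` Sigma UNIV roots)"
    by (rule card_mono[OF _ sub]) simp
  also have "\<dots> \<le> card (Sigma UNIV roots)"
    by (rule card_image_le) simp
  also have "\<dots> = (\<Sum>xy\<in>UNIV. card (roots xy))"
    by simp
  also have "\<dots> \<le> (\<Sum>xy\<in>(UNIV :: ('a \<times> 'a) set). q + 1)"
    unfolding roots_def using card_roots_power_plus_const_le by (intro sum_mono) simp
  also have "\<dots> = CARD('a) ^ 2 * (q + 1)"
    by (simp add: power2_eq_square)
  finally show ?thesis .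
qed

lemma card_proj_point:
  assumes "(v :: 'a::{field,finite} vec3) \<noteq> 0"
  shows "card (proj_point v) = CARD('a) - 1"
proof -
  have "proj_point v = (\<lambda>c. smult3 c v) ` (UNIV - {0})"
    unfolding proj_point_def by auto
  moreover have "inj_on (\<lambda>c. smult3 c v) (UNIV - {0})"
    using assms by (cases v) (auto simp: inj_on_def zero_prod_def)
  ultimately show ?thesis
    by (simp add: card_image card_Diff_subset)
qed

lemma card_hermitian_unital_mult_le:
  "card (hermitian_unital q :: 'a::{field,finite} vec3 set set) * (CARD('a) - 1)
     \<le> CARD('a) ^ 2 * (q + 1)"
proof -
  let ?U = "hermitian_unital q :: 'a vec3 set set"
  have "pairwise disjnt ?U"
    unfolding pairwise_def disjnt_def hermitian_unital_eq_image
    by (auto dest: proj_point_eq_if_mem)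
  then have "card (\<Union> ?U) = (\<Sum>P\<in>?U. card P)"
    by (rule card_Union_disjoint) simp
  then have "card (unital_vectors q :: 'a vec3 set) = (\<Sum>P\<in>?U. card P)"
    by (simp only: Union_hermitian_unital)
  also have "\<dots> = (\<Sum>P\<in>?U. CARD('a) - 1)"
  proof (rule sum.cong)
    fix P assume "P \<in> ?U"
    then obtain v where "v \<noteq> 0" "P = proj_point v"
      unfolding hermitian_unital_def by auto
    then show "card P = CARD('a) - 1" by (simp add: card_proj_point)
  qed simp
  also have "\<dots> = card ?U * (CARD('a) - 1)"
    by simp
  finally show ?thesis
    using card_unital_vectors_le[of q, where 'a = 'a] by simp
qed

text \<open>The unital has exactly \<open>q\<^sup>3 + 1\<close> points; the crude count above (at most \<open>q + 1\<close>
  values of \<open>z\<close> for each \<open>(x, y)\<close>) already suffices.\<close>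
lemma card_hermitian_unital_le:
  assumes "CARD('a::{field,finite}) = q ^ 2" "q \<ge> 2"
  shows "card (hermitian_unital q :: 'a vec3 set set) \<le> 2 * q ^ 3"
proof -
  let ?u = "card (hermitian_unital q :: 'a vec3 set set)"
  have "q ^ 2 - 1 = (q - 1) * (q + 1)"
    by (cases q) (simp_all add: power2_eq_square)
  moreover have "(q ^ 2) ^ 2 = q ^ 3 * q"
    by (simp flip: power_mult power_Suc2)
  ultimately have "?u * (q - 1) * (q + 1) \<le> q ^ 3 * q * (q + 1)"
    using card_hermitian_unital_mult_le[of q, where 'a = 'a]
    unfolding assms(1) by (simp only: mult.assoc)
  then have "?u * (q - 1) \<le> q ^ 3 * q"
    by (rule mult_right_le_imp_le) simp
  also have "\<dots> \<le> q ^ 3 * (2 * (q - 1))"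
    using assms(2) by (intro mult_left_mono) simp_all
  finally have "?u * (q - 1) \<le> 2 * q ^ 3 * (q - 1)"
    by (simp only: ac_simps)
  then show ?thesis
    by (rule mult_right_le_imp_le) (use assms(2) in simp)
qed

section \<open>Colourings with a small minority\<close>

text \<open>The coins \<open>B\<close> are grouped by \<open>pt\<close>; for incidences \<open>(P, l)\<close> and \<open>pt = fst\<close> the
  groups are the cliques \<open>C\<^sub>P\<close>.\<close>
definition minority_count :: "'c set \<Rightarrow> ('c \<Rightarrow> 'p) \<Rightarrow> ('c \<Rightarrow> bool) \<Rightarrow> nat" where
  "minority_count B pt \<sigma> =
     (\<Sum>P\<in>pt ` B. min (card {c\<in>B. pt c = P \<and> \<sigma> c}) (card {c\<in>B. pt c = P \<and> \<not> \<sigma> c}))"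

definition majority :: "'c set \<Rightarrow> ('c \<Rightarrow> 'p) \<Rightarrow> ('c \<Rightarrow> bool) \<Rightarrow> 'p \<Rightarrow> bool" where
  "majority B pt \<sigma> P \<longleftrightarrow> card {c\<in>B. pt c = P \<and> \<not> \<sigma> c} \<le> card {c\<in>B. pt c = P \<and> \<sigma> c}"

definition minority_set :: "'c set \<Rightarrow> ('c \<Rightarrow> 'p) \<Rightarrow> ('c \<Rightarrow> bool) \<Rightarrow> 'c set" where
  "minority_set B pt \<sigma> = {c\<in>B. \<sigma> c \<noteq> majority B pt \<sigma> (pt c)}"

lemma card_minority_set:
  assumes "finite B"
  shows "card (minority_set B pt \<sigma>) = minority_count B pt \<sigma>"
proof -
  have "card (minority_set B pt \<sigma>) = card (\<Union>P\<in>pt ` B. {c\<in>minority_set B pt \<sigma>. pt c = P})"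
    by (rule arg_cong[where f = card]) (auto simp: minority_set_def)
  also have "\<dots> = (\<Sum>P\<in>pt ` B. card {c\<in>minority_set B pt \<sigma>. pt c = P})"
    by (rule card_UN_disjoint) (use assms in \<open>auto simp: minority_set_def\<close>)
  also have "\<dots> = minority_count B pt \<sigma>"
    unfolding minority_count_def
  proof (rule sum.cong)
    fix P
    show "card {c\<in>minority_set B pt \<sigma>. pt c = P}
        = min (card {c\<in>B. pt c = P \<and> \<sigma> c}) (card {c\<in>B. pt c = P \<and> \<not> \<sigma> c})"
    proof (cases "majority B pt \<sigma> P")
      case True
      then have "{c\<in>minority_set B pt \<sigma>. pt c = P} = {c\<in>B. pt c = P \<and> \<not> \<sigma> c}"
        unfolding minority_set_def by auto
      with True show ?thesis unfolding majority_def by simp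
    next
      case False
      then have "{c\<in>minority_set B pt \<sigma>. pt c = P} = {c\<in>B. pt c = P \<and> \<sigma> c}"
        unfolding minority_set_def by auto
      with False show ?thesis unfolding majority_def by simp
    qed
  qed simp
  finally show ?thesis .
qed

text \<open>A colouring is determined by its minority set, the majority colour of every group
  and its values outside \<open>B\<close>.\<close>
lemma card_minority_count_le:
  assumes "finite I" "B \<subseteq> I"
  shows "card {\<sigma> \<in> PiE I (\<lambda>_. UNIV). minority_count B pt \<sigma> \<le> M}
           \<le> card {S. S \<subseteq> B \<and> card S \<le> M} * 2 ^ card (pt ` B) * 2 ^ (card I - card B)"
proof -
  let ?Few = "{\<sigma> \<in> PiE I (\<lambda>_. UNIV). minority_count B pt \<sigma> \<le> M}"
  let ?T = "{S. S \<subseteq> B \<and> card S \<le> M} \<times> (pt ` B \<rightarrow>\<^sub>E (UNIV :: bool set))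
              \<times> (I - B \<rightarrow>\<^sub>E (UNIV :: bool set))"
  define encode where "encode \<sigma> =
      (minority_set B pt \<sigma>, restrict (majority B pt \<sigma>) (pt ` B), restrict \<sigma> (I - B))"
    for \<sigma> :: "'a \<Rightarrow> bool"
  have finite_B: "finite B"
    using assms finite_subset by blast
  have "encode ` ?Few \<subseteq> ?T"
  proof
    fix x assume "x \<in> encode ` ?Few"
    then obtain \<sigma> where "\<sigma> \<in> ?Few" "x = encode \<sigma>"
      by blast
    moreover have "minority_set B pt \<sigma> \<subseteq> B"
      unfolding minority_set_def by auto
    ultimately show "x \<in> ?T"
      using card_minority_set[OF finite_B, of pt \<sigma>] unfolding encode_def by auto
  qed
  moreover have inj: "inj_on encode ?Few"
  proof (rule inj_onI)
    fix \<sigma> \<tau> assume \<sigma>: "\<sigma> \<in> ?Few" and \<tau>: "\<tau> \<in> ?Few" and "encode \<sigma> = encode \<tau>"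
    then have minority: "minority_set B pt \<sigma> = minority_set B pt \<tau>"
      and majority: "restrict (majority B pt \<sigma>) (pt ` B) = restrict (majority B pt \<tau>) (pt ` B)"
      and outside: "restrict \<sigma> (I - B) = restrict \<tau> (I - B)"
      unfolding encode_def by simp_all
    show "\<sigma> = \<tau>"
    proof
      fix c
      consider "c \<notin> I" | "c \<in> I - B" | "c \<in> B"
        using assms(2) by blast
      then show "\<sigma> c = \<tau> c"
      proof cases
        case 1
        with \<sigma> \<tau> show ?thesis by (auto simp: PiE_def extensional_def)
      next
        case 2
        with fun_cong[OF outside, of c] show ?thesis by simp
      next
        case 3
        with fun_cong[OF majority, of "pt c"]
        have "majority B pt \<sigma> (pt c) = majority B pt \<tau> (pt c)" by simp
        moreover have "c \<in> minority_set B pt \<sigma> \<longleftrightarrow> c \<in> minority_set B pt \<tau>"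
          using minority by simp
        ultimately show ?thesis
          using 3 unfolding minority_set_def by auto
      qed
    qed
  qed
  moreover have "finite ?T"
    using assms finite_B by (intro finite_cartesian_product finite_PiE) auto
  ultimately have "card (encode ` ?Few) \<le> card ?T"
    by (intro card_mono)
  then have "card ?Few \<le> card ?T"
    by (simp add: card_image[OF inj])
  also have "card ?T = card {S. S \<subseteq> B \<and> card S \<le> M} * 2 ^ card (pt ` B) * 2 ^ (card I - card B)"
    using assms finite_B by (simp add: card_cartesian_product card_PiE card_Diff_subset)
  finally show ?thesis .
qed

text \<open>For \<open>k \<le> M\<close> we have \<open>16 ^ N \<le> 16 ^ M * 16 ^ (N - k)\<close>, and the binomial theorem sums
  \<open>(N choose k) * 16 ^ (N - k)\<close> to \<open>17 ^ N\<close>.\<close>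
lemma card_small_subsets_le:
  assumes "finite B"
  shows "card {S. S \<subseteq> B \<and> card S \<le> M} * 16 ^ card B \<le> 16 ^ M * 17 ^ card B"
proof -
  let ?N = "card B"
  have "{S. S \<subseteq> B \<and> card S \<le> M} = (\<Union>k\<le>M. {S. S \<subseteq> B \<and> card S = k})"
    by auto
  also have "card \<dots> = (\<Sum>k\<le>M. card {S. S \<subseteq> B \<and> card S = k})"
    by (rule card_UN_disjoint) (use assms in auto)
  finally have "card {S. S \<subseteq> B \<and> card S \<le> M} = (\<Sum>k\<le>M. ?N choose k)"
    using assms by (simp add: n_subsets)
  then have "card {S. S \<subseteq> B \<and> card S \<le> M} * 16 ^ ?N = (\<Sum>k\<le>M. (?N choose k) * 16 ^ ?N)"
    by (simp add: sum_distrib_right)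
  also have "\<dots> \<le> (\<Sum>k\<le>M. 16 ^ M * ((?N choose k) * 16 ^ (?N - k)))"
  proof (rule sum_mono)
    fix k assume "k \<in> {..M}"
    show "(?N choose k) * 16 ^ ?N \<le> 16 ^ M * ((?N choose k) * 16 ^ (?N - k))"
    proof (cases "k \<le> ?N")
      case True
      have "(16::nat) ^ ?N = 16 ^ k * 16 ^ (?N - k)"
        using True by (simp flip: power_add)
      also have "\<dots> \<le> 16 ^ M * 16 ^ (?N - k)"
        using \<open>k \<in> {..M}\<close> by (intro mult_right_mono power_increasing) auto
      finally show ?thesis by (simp add: algebra_simps)
    qed simp
  qed
  also have "\<dots> = 16 ^ M * (\<Sum>k\<le>M. (?N choose k) * 16 ^ (?N - k))"
    by (simp add: sum_distrib_left)
  also have "\<dots> \<le> 16 ^ M * (\<Sum>k\<le>?N. (?N choose k) * 16 ^ (?N - k))"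
  proof -
    have "(\<Sum>k\<le>M. (?N choose k) * 16 ^ (?N - k)) = (\<Sum>k\<le>min M ?N. (?N choose k) * 16 ^ (?N - k))"
      by (rule sum.mono_neutral_right) auto
    also have "\<dots> \<le> (\<Sum>k\<le>?N. (?N choose k) * 16 ^ (?N - k))"
      by (rule sum_mono2) auto
    finally show ?thesis by simp
  qed
  also have "(\<Sum>k\<le>?N. (?N choose k) * 16 ^ (?N - k)) = (1 + 16) ^ ?N"
    by (subst binomial_ring) simp
  finally show ?thesis by simp
qed

lemma power_bound_for_minority_count:
  assumes "16 * M \<le> (N :: nat)"
  shows "16 ^ M * 17 ^ N * 2 ^ M * 2 ^ (8 * M) \<le> (32 :: nat) ^ N"
proof -
  obtain e where N: "N = 16 * M + e"
    using assms le_Suc_ex by blast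
  have two: "(16 :: nat) ^ M * 2 ^ M * 2 ^ (8 * M) = (2 ^ 13) ^ M"
    by (simp add: power_mult flip: power_mult_distrib)
  have seventeen: "(17 :: nat) ^ N = (17 ^ 16) ^ M * 17 ^ e"
    unfolding N by (simp add: power_add power_mult)
  have "(16 :: nat) ^ M * 17 ^ N * 2 ^ M * 2 ^ (8 * M) = (16 ^ M * 2 ^ M * 2 ^ (8 * M)) * 17 ^ N"
    by (simp only: ac_simps)
  also have "\<dots> = (2 ^ 13) ^ M * ((17 ^ 16) ^ M * 17 ^ e)"
    by (simp only: two seventeen)
  also have "\<dots> = (2 ^ 13 * 17 ^ 16) ^ M * 17 ^ e"
    by (simp only: power_mult_distrib mult.assoc)
  also have "\<dots> \<le> (32 ^ 16) ^ M * 32 ^ e"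
    by (intro mult_mono power_mono) simp_all
  also have "\<dots> = 32 ^ N"
    unfolding N by (simp add: power_add power_mult)
  finally show ?thesis .
qed

lemma card_minority_count_le_exp:
  assumes "finite I" "B \<subseteq> I" "card (pt ` B) \<le> M" "16 * M \<le> card B"
  shows "card {\<sigma> \<in> PiE I (\<lambda>_. UNIV). minority_count B pt \<sigma> \<le> M} * 2 ^ (8 * M)
           \<le> 2 ^ card I"
proof -
  let ?few = "card {\<sigma> \<in> PiE I (\<lambda>_. UNIV). minority_count B pt \<sigma> \<le> M}"
  let ?N = "card B"
  have finite_B: "finite B"
    using assms finite_subset by blast
  have "?N \<le> card I"
    using assms by (simp add: card_mono)
  have "?few * 2 ^ (8 * M) * 16 ^ ?N
      \<le> (card {S. S \<subseteq> B \<and> card S \<le> M} * 16 ^ ?N) * 2 ^ card (pt ` B) * 2 ^ (8 * M)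
          * 2 ^ (card I - ?N)"
    using card_minority_count_le[OF assms(1,2), of pt M] by (simp add: ac_simps)
  also have "\<dots> \<le> (16 ^ M * 17 ^ ?N * 2 ^ M * 2 ^ (8 * M)) * 2 ^ (card I - ?N)"
  proof -
    have "(2 :: nat) ^ card (pt ` B) \<le> 2 ^ M"
      using assms(3) by (rule power_increasing) simp
    with card_small_subsets_le[OF finite_B, of M]
    have "card {S. S \<subseteq> B \<and> card S \<le> M} * 16 ^ ?N * 2 ^ card (pt ` B) \<le> 16 ^ M * 17 ^ ?N * 2 ^ M"
      by (rule mult_mono) simp_all
    then show ?thesis
      by (intro mult_right_mono) simp_all
  qed
  also have "\<dots> \<le> 32 ^ ?N * 2 ^ (card I - ?N)"
    using power_bound_for_minority_count[OF assms(4)] by (rule mult_right_mono) simp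
  also have "\<dots> = 16 ^ ?N * (2 ^ ?N * 2 ^ (card I - ?N))"
    by (simp flip: power_mult_distrib)
  also have "\<dots> = 2 ^ card I * 16 ^ ?N"
    using \<open>?N \<le> card I\<close> by (simp flip: power_add)
  finally show ?thesis
    by simp
qed

lemma prob_coin_flips_le:
  assumes "finite I" "N > 0"
    and "card {\<sigma> \<in> PiE I (\<lambda>_. UNIV :: bool set). Q \<sigma>} * N \<le> 2 ^ card I"
  shows "measure_pmf.prob (pmf_of_set (PiE I (\<lambda>_. UNIV :: bool set))) {\<sigma>. Q \<sigma>} \<le> 1 / real N"
proof -
  let ?\<Omega> = "PiE I (\<lambda>_. UNIV :: bool set)"
  have "?\<Omega> \<noteq> {}" "finite ?\<Omega>" "card ?\<Omega> = 2 ^ card I"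
    using assms(1) by (simp_all add: PiE_eq_empty_iff card_PiE finite_PiE)
  then have "measure_pmf.prob (pmf_of_set ?\<Omega>) {\<sigma>. Q \<sigma>} = card {\<sigma> \<in> ?\<Omega>. Q \<sigma>} / 2 ^ card I"
    by (simp add: measure_pmf_of_set Int_def)
  also have "\<dots> \<le> 1 / real N"
  proof -
    have "real (card {\<sigma> \<in> ?\<Omega>. Q \<sigma>}) * real N \<le> 2 ^ card I"
      using assms(3) by (metis of_nat_le_iff of_nat_mult of_nat_numeral of_nat_power)
    with assms(2) show ?thesis
      by (simp add: field_simps)
  qed
  finally show ?thesis .
qed

section \<open>Edges of the random graph\<close>

lemma sum_le_sum_ge_plus_card_mult:
  fixes f :: "'a \<Rightarrow> nat"
  assumes "finite A"
  shows "(\<Sum>x\<in>A. f x) \<le> (\<Sum>x\<in>{x\<in>A. D \<le> f x}. f x) + card A * D"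
proof -
  have "(\<Sum>x\<in>A. f x) = (\<Sum>x\<in>A \<inter> {x. D \<le> f x}. f x) + (\<Sum>x\<in>A - {x. D \<le> f x}. f x)"
    using assms by (rule sum.Int_Diff)
  also have "(\<Sum>x\<in>A - {x. D \<le> f x}. f x) \<le> (\<Sum>x\<in>A - {x. D \<le> f x}. D)"
    by (rule sum_mono) simp
  also have "\<dots> \<le> card A * D"
    using assms by (simp add: card_mono)
  finally show ?thesis
    by (simp add: Int_def conj_commute)
qed

lemma sum_card_secants_through_point:
  fixes X :: "'a::{field,finite} vec3 set set set"
  assumes "X \<subseteq> secants q"
  shows "(\<Sum>P\<in>hermitian_unital q. card {l\<in>X. P \<in> l}) = (q + 1) * card X"
proof (rule sum_multicount)
  show "\<forall>l\<in>X. card {P\<in>hermitian_unital q. P \<in> l} = q + 1"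
    using assms unfolding secants_def by (auto simp: Int_def conj_commute)
qed simp_all

text \<open>The edges contributed by different points are distinct because two secants meet at most
  once.\<close>
lemma sum_card_mult_le_Z_edges:
  fixes X :: "'a::{field,finite} vec3 set set set"
  assumes "X \<subseteq> secants q"
  shows "(\<Sum>P\<in>hermitian_unital q.
            card {l\<in>X. P \<in> l \<and> \<sigma> (P, l)} * card {l\<in>X. P \<in> l \<and> \<not> \<sigma> (P, l)})
         \<le> Z_edges q X \<sigma>"
proof -
  let ?U = "hermitian_unital q :: 'a vec3 set set"
  define A where "A P = {l\<in>X. P \<in> l \<and> \<sigma> (P, l)}" for P
  define B where "B P = {l\<in>X. P \<in> l \<and> \<not> \<sigma> (P, l)}" for P
  define E where "E P = (\<lambda>(l, l'). {l, l'}) ` (A P \<times> B P)" for P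
  have card_E: "card (E P) = card (A P) * card (B P)" for P
  proof -
    have "inj_on (\<lambda>(l, l'). {l, l'}) (A P \<times> B P)"
      by (auto simp: inj_on_def doubleton_eq_iff A_def B_def)
    then show ?thesis
      unfolding E_def by (simp add: card_image card_cartesian_product)
  qed
  have lines: "l \<in> PG_lines" if "l \<in> X" for l
    using that assms unfolding secants_def by auto
  have E_edges: "E P \<subseteq> {{l, l'} | l l'. l \<in> X \<and> l' \<in> X \<and> l \<noteq> l' \<and> Hstar_adj q \<sigma> l l'}"
    if "P \<in> ?U" for P
  proof
    fix e assume "e \<in> E P"
    then obtain l l' where ll: "l \<in> A P" "l' \<in> B P" "e = {l, l'}"
      unfolding E_def by auto
    then have "l \<in> X" "l' \<in> X" "l \<noteq> l'" "(P, l) \<in> incid q" "(P, l') \<in> incid q"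
      "\<sigma> (P, l) \<noteq> \<sigma> (P, l')"
      using that assms unfolding A_def B_def incid_def by auto
    then have "l \<in> X \<and> l' \<in> X \<and> l \<noteq> l' \<and> Hstar_adj q \<sigma> l l'"
      using that unfolding Hstar_adj_def by auto
    with ll(3) show "e \<in> {{l, l'} | l l'. l \<in> X \<and> l' \<in> X \<and> l \<noteq> l' \<and> Hstar_adj q \<sigma> l l'}"
      by blast
  qed
  have E_disjoint: "E P \<inter> E P' = {}" if "P \<noteq> P'" for P P'
  proof (rule ccontr)
    assume "E P \<inter> E P' \<noteq> {}"
    then obtain l l' m m' where "l \<in> A P" "l' \<in> B P" "m \<in> A P'" "m' \<in> B P'"
      and "{l, l'} = {m, m'}"
      unfolding E_def by auto
    then have "l \<in> X" "l' \<in> X" "l \<noteq> l'" "P \<in> l" "P \<in> l'" "P' \<in> l" "P' \<in> l'"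
      unfolding A_def B_def by (auto simp: doubleton_eq_iff)
    with lines have "P = P'"
      by (intro PG_lines_meet_at_most_once[of l l' P P']) simp_all
    with that show False by simp
  qed
  have "(\<Sum>P\<in>?U. card (A P) * card (B P)) = card (\<Union>P\<in>?U. E P)"
    by (simp add: card_E card_UN_disjoint E_disjoint)
  also have "\<dots> \<le> Z_edges q X \<sigma>"
    unfolding Z_edges_def using E_edges by (intro card_mono) auto
  finally show ?thesis unfolding A_def B_def .
qed

lemma card_rich_incidences:
  fixes X :: "'a::{field,finite} vec3 set set set"
  assumes "X \<subseteq> secants q"
  shows "(q + 1) * card X
           \<le> card (SIGMA P:{P \<in> hermitian_unital q. D \<le> card {l\<in>X. P \<in> l}}. {l\<in>X. P \<in> l})
             + card (hermitian_unital q :: 'a vec3 set set) * D"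
proof -
  let ?U = "hermitian_unital q :: 'a vec3 set set"
  have "(q + 1) * card X = (\<Sum>P\<in>?U. card {l\<in>X. P \<in> l})"
    by (rule sum_card_secants_through_point[OF assms, symmetric])
  also have "\<dots> \<le> (\<Sum>P\<in>{P \<in> ?U. D \<le> card {l\<in>X. P \<in> l}}. card {l\<in>X. P \<in> l}) + card ?U * D"
    by (rule sum_le_sum_ge_plus_card_mult) simp
  finally show ?thesis
    by simp
qed

lemma min_mult_add_le: "min a b * (a + b) \<le> 2 * (a * b :: nat)"
  by (cases "a \<le> b") (simp_all add: min_def algebra_simps)

lemma card_filter_add_card_filter_not:
  "finite A \<Longrightarrow> card {x\<in>A. Q x} + card {x\<in>A. \<not> Q x} = card A"
  by (subst card_Un_disjoint[symmetric]) (auto intro: arg_cong[where f = card])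

lemma minority_count_le_Z_edges:
  fixes X :: "'a::{field,finite} vec3 set set set"
  assumes "X \<subseteq> secants q" "G \<subseteq> hermitian_unital q"
    and "\<forall>P\<in>G. D \<le> card {l\<in>X. P \<in> l}"
  shows "D * minority_count (SIGMA P:G. {l\<in>X. P \<in> l}) fst \<sigma> \<le> 2 * Z_edges q X \<sigma>"
proof -
  let ?B = "SIGMA P:G. {l\<in>X. P \<in> l}"
  define a where "a P = card {l\<in>X. P \<in> l \<and> \<sigma> (P, l)}" for P
  define b where "b P = card {l\<in>X. P \<in> l \<and> \<not> \<sigma> (P, l)}" for P
  have card_fibre: "card {c\<in>?B. fst c = P \<and> \<rho> c} = card {l\<in>X. P \<in> l \<and> \<rho> (P, l)}"
    if "P \<in> G" for P \<rho>
  proof -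
    have "{c\<in>?B. fst c = P \<and> \<rho> c} = Pair P ` {l\<in>X. P \<in> l \<and> \<rho> (P, l)}"
      using that by auto
    then show ?thesis by (simp add: card_image inj_on_def)
  qed
  have "D * minority_count ?B fst \<sigma> = (\<Sum>P\<in>fst ` ?B. D * min (a P) (b P))"
    unfolding minority_count_def sum_distrib_left a_def b_def
    using card_fibre[of _ \<sigma>] card_fibre[of _ "\<lambda>c. \<not> \<sigma> c"] by (intro sum.cong) auto
  also have "\<dots> \<le> (\<Sum>P\<in>fst ` ?B. 2 * (a P * b P))"
  proof (rule sum_mono)
    fix P assume "P \<in> fst ` ?B"
    then have "P \<in> G" by auto
    moreover have "a P + b P = card {l\<in>X. P \<in> l}"
      using card_filter_add_card_filter_not[of "{l\<in>X. P \<in> l}" "\<lambda>l. \<sigma> (P, l)"]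
      unfolding a_def b_def by (simp add: conj_assoc)
    ultimately have "D \<le> a P + b P"
      using assms(3) by simp
    then have "D * min (a P) (b P) \<le> min (a P) (b P) * (a P + b P)"
      by (simp add: mult.commute)
    also have "\<dots> \<le> 2 * (a P * b P)"
      by (rule min_mult_add_le)
    finally show "D * min (a P) (b P) \<le> 2 * (a P * b P)" .
  qed
  also have "\<dots> \<le> (\<Sum>P\<in>hermitian_unital q. 2 * (a P * b P))"
    using assms(2) by (intro sum_mono2) auto
  also have "\<dots> \<le> 2 * Z_edges q X \<sigma>"
    using sum_card_mult_le_Z_edges[OF assms(1), of \<sigma>]
    unfolding a_def b_def by (simp add: sum_distrib_left[symmetric])
  finally show ?thesis .
qed

section \<open>Numerical estimates\<close>

lemma power16_less_exp2: "128 \<le> q \<Longrightarrow> (q :: nat) ^ 16 < 2 ^ q"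
proof (induction q rule: dec_induct)
  case base
  then show ?case by simp
next
  case (step q)
  have "((q + 1) * 128) ^ 16 \<le> (129 * q) ^ 16"
    using step(1) by (intro power_mono) simp_all
  then have "(q + 1) ^ 16 * 128 ^ 16 \<le> 129 ^ 16 * q ^ 16"
    by (simp only: power_mult_distrib)
  also have "\<dots> \<le> (2 * q ^ 16) * 128 ^ 16"
    by simp
  finally have "(q + 1) ^ 16 \<le> 2 * q ^ 16"
    by simp
  also have "\<dots> < 2 * 2 ^ q"
    using step(3) by simp
  finally show ?case by simp
qed

lemma one_div_two_power_less:
  assumes "128 \<le> q"
  shows "1 / 2 ^ (2 ^ 22 * q ^ 3) < 1 / real (q ^ 2 * (q ^ 2 - q + 1)) ^ (2 ^ 24 * q ^ 2)"
proof -
  have "q \<le> q ^ 2"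
    by (simp add: power2_eq_square)
  then have "0 < q ^ 2 - q + 1" "q ^ 2 - q + 1 \<le> q ^ 2"
    using assms by linarith+
  then have "(q ^ 2 * (q ^ 2 - q + 1)) ^ (2 ^ 24 * q ^ 2) \<le> (q ^ 2 * q ^ 2) ^ (2 ^ 24 * q ^ 2)"
    by (intro power_mono mult_left_mono) simp_all
  also have "\<dots> = (q ^ 16) ^ (2 ^ 22 * q ^ 2)"
    by (simp flip: power_mult power_add)
  also have "\<dots> < (2 ^ q) ^ (2 ^ 22 * q ^ 2)"
    using power16_less_exp2[OF assms] assms by (intro power_strict_mono) simp_all
  also have "\<dots> = 2 ^ (2 ^ 22 * q ^ 3)"
    by (simp flip: power_mult add: power3_eq_cube power2_eq_square ac_simps)
  finally have "real ((q ^ 2 * (q ^ 2 - q + 1)) ^ (2 ^ 24 * q ^ 2)) < real (2 ^ (2 ^ 22 * q ^ 3))"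
    by (simp only: of_nat_less_iff)
  moreover have "0 < (q ^ 2 * (q ^ 2 - q + 1)) ^ (2 ^ 24 * q ^ 2)"
    using \<open>0 < q ^ 2 - q + 1\<close> assms by simp
  then have "0 < real ((q ^ 2 * (q ^ 2 - q + 1)) ^ (2 ^ 24 * q ^ 2))"
    by (simp only: of_nat_0_less_iff)
  ultimately show ?thesis
    by (simp only: of_nat_power of_nat_numeral) (rule divide_strict_left_mono, simp_all)
qed

theorem mainTheorem8:
  fixes q :: nat and X :: "'a::{field,finite} vec3 set set set"
  assumes q_pp: "\<exists>p k. prime p \<and> k \<ge> 1 \<and> q = p ^ k"
    and q_big: "q \<ge> 2 ^ 40"
    and field_card: "CARD('a) = q ^ 2"
    and X_sub: "X \<subseteq> secants q"
    and X_card: "card X = 2 ^ 24 * q ^ 2"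
  shows "measure_pmf.prob (coin_space q) {\<sigma>. Z_edges q X \<sigma> \<le> 2 ^ 40 * q ^ 3}
           < 1 / (real (q ^ 2 * (q ^ 2 - q + 1))) ^ (2 ^ 24 * q ^ 2)"
proof -
  let ?U = "hermitian_unital q :: 'a vec3 set set"
  let ?I = "incid q :: ('a vec3 set \<times> 'a vec3 set set) set"
  define M where "M = 2 ^ 19 * q ^ 3"
  define G where "G = {P \<in> ?U. 2 ^ 22 \<le> card {l\<in>X. P \<in> l}}"
  define B where "B = (SIGMA P:G. {l\<in>X. P \<in> l})"
  have q: "128 \<le> q"
    using q_big by simp
  have card_U: "card ?U \<le> 2 * q ^ 3"
    using card_hermitian_unital_le[OF field_card] q by simp
  have B_incid: "B \<subseteq> ?I"
    using X_sub unfolding B_def G_def incid_def by auto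
  have card_groups: "card (fst ` B) \<le> M"
    using card_mono[of ?U "fst ` B"] card_U unfolding B_def G_def M_def by fastforce
  have card_B: "16 * M \<le> card B"
  proof -
    have "2 ^ 24 * q ^ 3 \<le> (q + 1) * card X"
      unfolding X_card by (simp add: power2_eq_square power3_eq_cube)
    also have "\<dots> \<le> card B + card ?U * 2 ^ 22"
      unfolding B_def G_def by (rule card_rich_incidences[OF X_sub])
    finally show ?thesis
      using card_U unfolding M_def by simp
  qed
  have "minority_count B fst \<sigma> \<le> M" if "Z_edges q X \<sigma> \<le> 2 ^ 40 * q ^ 3" for \<sigma>
    using minority_count_le_Z_edges[OF X_sub, of G "2 ^ 22" \<sigma>] that
    unfolding B_def G_def M_def by auto
  then have "card {\<sigma> \<in> PiE ?I (\<lambda>_. UNIV). Z_edges q X \<sigma> \<le> 2 ^ 40 * q ^ 3}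
      \<le> card {\<sigma> \<in> PiE ?I (\<lambda>_. UNIV). minority_count B fst \<sigma> \<le> M}"
    by (intro card_mono) auto
  with card_minority_count_le_exp[OF finite B_incid card_groups card_B]
  have "card {\<sigma> \<in> PiE ?I (\<lambda>_. UNIV). Z_edges q X \<sigma> \<le> 2 ^ 40 * q ^ 3} * 2 ^ (8 * M)
      \<le> 2 ^ card ?I"
    by (meson le_trans mult_le_mono1)
  then have "measure_pmf.prob (coin_space q) {\<sigma>. Z_edges q X \<sigma> \<le> 2 ^ 40 * q ^ 3} \<le> 1 / 2 ^ (8 * M)"
    unfolding coin_space_def using prob_coin_flips_le[of ?I "2 ^ (8 * M)"] by simp
  also have "\<dots> < 1 / (real (q ^ 2 * (q ^ 2 - q + 1))) ^ (2 ^ 24 * q ^ 2)"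
    using one_div_two_power_less[OF q] unfolding M_def by simp
  finally show ?thesis .
qed

end
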